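(* For every $\delta\in(0,1/6)$, $\mathbb P$-a.s. for all $N$ large enough there exist radii $(\rho_x)_{x\in\mathbb H_N}$ with $1\le\rho_x\le N^{3\delta}$ such that for all $x\in\mathbb H_N$ and all $y\in\partial B(x,\rho_x)$ one has $\tau_y\le 2^{\frac12N^{1-\delta}}$.
   Context: $\mathbb H_N=\{-1,1\}^N$ with Hamming distance $d$; $B(x,r)=\{y:d(x,y)\le r\}$, $\partial B(x,r)=\{y:d(x,y)=r\}$. $(E_x)_{x\in\mathbb H_N,N\ge1}$ i.i.d. standard Gaussians on $(\Omega,\mathcal F,\mathbb P)$; $\beta>0$; $\tau_x=e^{\beta\sqrt NE_x}$. "$\mathbb P$-a.s. for $N$ large enough" means: for $\mathbb P$-a.e. realization there is $N_0$ such that the statement holds for all $N\ge N_0$. *)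

theory Defs
  imports "HOL-Probability.Probability"
begin

definition hcube :: "nat \<Rightarrow> int list set" where
  "hcube N = {x. length x = N \<and> set x \<subseteq> {-1, 1}}"

definition hdist :: "int list \<Rightarrow> int list \<Rightarrow> nat" where
  "hdist x y = card {i. i < length x \<and> x ! i \<noteq> y ! i}"

definition hsphere :: "nat \<Rightarrow> int list \<Rightarrow> nat \<Rightarrow> int list set" where
  "hsphere N x r = {y \<in> hcube N. hdist x y = r}"

definition gidx :: "(nat \<times> int list) set" where
  "gidx = {(N, x). N \<ge> 1 \<and> x \<in> hcube N}"

end

theory Submission
  imports Defs "HOL-Real_Asymp.Real_Asymp"
begin

text \<open>
  Put k = \<lfloor>N^(3\<delta>)\<rfloor> and t = ln 2 / (2\<beta>) \<cdot> N^(1/2-\<delta>). If no radius \<rho> \<le> k works for x, then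
  every sphere \<partial>B(x,r), 1 \<le> r \<le> k, contains a site y with E_y > t. Choosing one such site per
  sphere leaves at most N^(k^2) choices of k distinct sites, each exceeding t independently with
  probability at most 2 e^(-t^2/4). A union bound over x bounds the probability that some x fails by
  2^N N^(k^2) (2 e^(-t^2/4))^k = exp (N ln 2 + O(N^(6\<delta>) ln N) - \<Omega>(N^(1+\<delta>))),
  which is summable because 6\<delta> < 1 < 1 + \<delta>. Borel-Cantelli finishes the proof.
\<close>

lemma std_normal_density_le_normal_density:
  fixes t x :: real
  assumes "0 \<le> t" "t < x"
  shows "std_normal_density x \<le> exp (-(t^2)/4) * sqrt 2 * normal_density 0 (sqrt 2) x"
proof -
  have "t^2 \<le> x^2" using assms by (simp add: power_mono)
  then have e: "exp (- x\<^sup>2 / 2) \<le> exp (-(t^2)/4) * exp (-(x^2)/4)"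
    unfolding exp_add[symmetric] by simp
  have "normal_density 0 (sqrt 2) x = 1 / (sqrt 2 * sqrt (2*pi)) * exp (-(x^2)/4)"
    by (simp add: normal_density_def real_sqrt_mult)
  then have "exp (-(t^2)/4) * sqrt 2 * normal_density 0 (sqrt 2) x
      = 1 / sqrt (2*pi) * (exp (-(t^2)/4) * exp (-(x^2)/4))"
    by (simp add: field_simps)
  moreover have "std_normal_density x = 1 / sqrt (2*pi) * exp (- x\<^sup>2 / 2)"
    by (simp add: std_normal_density_def)
  ultimately show ?thesis using e by (simp add: divide_right_mono)
qed

lemma (in prob_space) prob_std_normal_greater_le:
  assumes X: "distributed M lborel X std_normal_density" and t: "0 \<le> t"
  shows "prob {\<omega>\<in>space M. t < X \<omega>} \<le> 2 * exp (-(t^2)/4)"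
proof -
  let ?g = "\<lambda>x. exp (-(t^2)/4) * sqrt 2 * normal_density 0 (sqrt 2) x"
  have "emeasure M {\<omega>\<in>space M. t < X \<omega>} = emeasure (density lborel std_normal_density) {t<..}"
    using distributed_measurable[OF X]
    by (subst distributed_distr_eq_density[OF X, symmetric], subst emeasure_distr)
       (auto intro!: arg_cong2[where f=emeasure])
  also have "\<dots> = (\<integral>\<^sup>+x. ennreal (std_normal_density x) * indicator {t<..} x \<partial>lborel)"
    by (subst emeasure_density) auto
  also have "\<dots> \<le> (\<integral>\<^sup>+x. ennreal (?g x) \<partial>lborel)"
    by (intro nn_integral_mono)
       (auto simp: indicator_def intro!: ennreal_leI dest: std_normal_density_le_normal_density[OF t])
  also have "\<dots> = ennreal (exp (-(t^2)/4) * sqrt 2)"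
    by (subst nn_integral_eq_integral) auto
  finally have "prob {\<omega>\<in>space M. t < X \<omega>} \<le> exp (-(t^2)/4) * sqrt 2"
    by (simp add: emeasure_eq_measure)
  also have "\<dots> \<le> exp (-(t^2)/4) * 2"
    by (intro mult_left_mono) (auto simp: real_sqrt_le_iff[of 2 4, simplified])
  finally show ?thesis by simp
qed

lemma hcube_eq_lists: "hcube N = {xs. set xs \<subseteq> {-1, 1} \<and> length xs = N}"
  unfolding hcube_def by auto

lemma finite_hcube [simp]: "finite (hcube N)"
  unfolding hcube_eq_lists by (rule finite_lists_length_eq) simp

lemma card_hcube: "card (hcube N) = 2 ^ N"
  unfolding hcube_eq_lists by (subst card_lists_length_eq) (simp_all add: numeral_2_eq_2)

lemma finite_hsphere [simp]: "finite (hsphere N x r)"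
  unfolding hsphere_def by simp

lemma card_hsphere_le:
  assumes x: "x \<in> hcube N"
  shows "card (hsphere N x r) \<le> N ^ r"
proof -
  define D where "D y = {i. i < N \<and> x ! i \<noteq> y ! i}" for y :: "int list"
  have "inj_on D (hsphere N x r)"
  proof (rule inj_onI)
    fix y z assume y: "y \<in> hsphere N x r" and z: "z \<in> hsphere N x r" and "D y = D z"
    show "y = z"
    proof (rule nth_equalityI)
      show "length y = length z" using y z by (simp add: hsphere_def hcube_def)
      fix i assume "i < length y"
      have "length x = N" "length y = N" "set x \<subseteq> {-1, 1}" "set y \<subseteq> {-1, 1}" "set z \<subseteq> {-1, 1}"
        using x y z by (auto simp: hsphere_def hcube_def)
      with \<open>i < length y\<close> \<open>length y = length z\<close>
      have "x ! i \<in> {-1, 1}" "y ! i \<in> {-1, 1}" "z ! i \<in> {-1, 1}" "i < N"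
        by (metis in_mono nth_mem)+
      moreover have "x ! i \<noteq> y ! i \<longleftrightarrow> x ! i \<noteq> z ! i"
        using \<open>D y = D z\<close> \<open>i < N\<close> unfolding D_def by blast
      ultimately show "y ! i = z ! i" by auto
    qed
  qed
  then have "card (hsphere N x r) = card (D ` hsphere N x r)"
    by (simp add: card_image)
  also have "\<dots> \<le> card {B. B \<subseteq> {..<N} \<and> card B = r}"
    using x by (intro card_mono) (auto simp: D_def hsphere_def hdist_def hcube_def)
  also have "\<dots> = N choose r"
    by (simp add: n_subsets)
  also have "\<dots> \<le> N ^ r"
    by (cases "r \<le> N") (auto intro: binomial_le_pow simp: binomial_eq_0 not_le)
  finally show ?thesis .
qed

lemma (in prob_space) prob_all_exceed_le:
  fixes X :: "'i \<Rightarrow> 'a \<Rightarrow> real"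
  assumes indep: "indep_vars (\<lambda>_. borel) X I" and J: "finite J" "J \<subseteq> I"
    and tail: "\<And>i. i \<in> I \<Longrightarrow> prob {\<omega>\<in>space M. t < X i \<omega>} \<le> p"
  shows "prob {\<omega>\<in>space M. \<forall>i\<in>J. t < X i \<omega>} \<le> p ^ card J"
proof (cases "J = {}")
  case False
  have "{\<omega>\<in>space M. \<forall>i\<in>J. t < X i \<omega>} = (\<Inter>i\<in>J. X i -` {t<..} \<inter> space M)"
    using False by auto
  also have "prob \<dots> = (\<Prod>i\<in>J. prob (X i -` {t<..} \<inter> space M))"
    using False J by (intro indep_varsD[OF indep]) auto
  also have "\<dots> \<le> (\<Prod>i\<in>J. p)"
    using J tail by (intro prod_mono) (auto simp: vimage_def Int_def conj_commute)
  finally show ?thesis by simp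
qed simp

lemma (in prob_space) prob_every_block_exceeds_le:
  fixes X :: "'i \<Rightarrow> 'a \<Rightarrow> real"
  assumes indep: "indep_vars (\<lambda>_. borel) X I"
    and R: "finite R"
    and S: "\<And>r. r \<in> R \<Longrightarrow> finite (S r) \<and> S r \<subseteq> I"
    and disj: "disjoint_family_on S R"
    and tail: "\<And>i. i \<in> I \<Longrightarrow> prob {\<omega>\<in>space M. t < X i \<omega>} \<le> p"
  shows "prob {\<omega>\<in>space M. \<forall>r\<in>R. \<exists>i\<in>S r. t < X i \<omega>} \<le> (\<Prod>r\<in>R. real (card (S r))) * p ^ card R"
proof -
  have exceed_events: "{\<omega>\<in>space M. t < X i \<omega>} \<in> events" if "i \<in> I" for i
  proof -
    have "random_variable borel (X i)" using indep that by (simp add: indep_vars_def)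
    then show ?thesis by measurable
  qed
  define B where "B c = {\<omega>\<in>space M. \<forall>i\<in>c ` R. t < X i \<omega>}" for c
  have B_events: "B c \<in> events" if "c \<in> Pi\<^sub>E R S" for c
    unfolding B_def using that R S by (intro sets.sets_Collect_finite_All exceed_events) auto
  have "{\<omega>\<in>space M. \<forall>r\<in>R. \<exists>i\<in>S r. t < X i \<omega>} \<subseteq> (\<Union>c\<in>Pi\<^sub>E R S. B c)"
  proof
    fix \<omega> assume "\<omega> \<in> {\<omega>\<in>space M. \<forall>r\<in>R. \<exists>i\<in>S r. t < X i \<omega>}"
    then have "\<omega> \<in> space M" "\<forall>r\<in>R. \<exists>i. i \<in> S r \<and> t < X i \<omega>" by auto
    then obtain c where "\<omega> \<in> space M" "\<forall>r\<in>R. c r \<in> S r \<and> t < X (c r) \<omega>"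
      by (auto dest: bchoice)
    then show "\<omega> \<in> (\<Union>c\<in>Pi\<^sub>E R S. B c)"
      by (intro UN_I[of "restrict c R"]) (auto simp: B_def)
  qed
  then have "prob {\<omega>\<in>space M. \<forall>r\<in>R. \<exists>i\<in>S r. t < X i \<omega>} \<le> prob (\<Union>c\<in>Pi\<^sub>E R S. B c)"
    using B_events R S by (intro finite_measure_mono sets.finite_UN finite_PiE) auto
  also have "\<dots> \<le> (\<Sum>c\<in>Pi\<^sub>E R S. prob (B c))"
    using B_events R S by (intro measure_UNION_le finite_PiE) auto
  also have "\<dots> \<le> (\<Sum>c\<in>Pi\<^sub>E R S. p ^ card R)"
  proof (intro sum_mono)
    fix c assume c: "c \<in> Pi\<^sub>E R S"
    have "inj_on c R"
      using c disj by (fastforce simp: inj_on_def disjoint_family_on_def PiE_iff)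
    moreover have "prob (B c) \<le> p ^ card (c ` R)"
      unfolding B_def using c R S by (intro prob_all_exceed_le[OF indep _ _ tail]) (auto simp: PiE_iff)
    ultimately show "prob (B c) \<le> p ^ card R" by (simp add: card_image)
  qed
  also have "\<dots> = (\<Prod>r\<in>R. real (card (S r))) * p ^ card R"
    using R by (simp add: card_PiE)
  finally show ?thesis .
qed

lemma union_bound_le_exp:
  fixes K t :: real and N k :: nat
  assumes N: "1 \<le> N" and k: "K / 2 \<le> k" "k \<le> K"
  shows "2 ^ N * real N ^ (k * k) * (2 * exp (-(t^2)/4)) ^ k
    \<le> exp (N * ln 2 + K^2 * ln N + K * ln 2 - K * t^2 / 8)"
proof -
  have "exp (N * ln 2 + real (k * k) * ln N + k * ln 2 + k * (-(t^2)/4))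
      = exp (N * ln 2) * exp (real (k * k) * ln N) * exp (k * ln 2) * exp (k * (-(t^2)/4))"
    by (simp only: exp_add)
  also have "\<dots> = 2 ^ N * real N ^ (k * k) * 2 ^ k * exp (-(t^2)/4) ^ k"
    using N by (simp only: exp_of_nat_mult) simp
  finally have "2 ^ N * real N ^ (k * k) * (2 * exp (-(t^2)/4)) ^ k
      = exp (N * ln 2 + real (k * k) * ln N + k * ln 2 + k * (-(t^2)/4))"
    by (simp add: power_mult_distrib)
  also have "\<dots> \<le> exp (N * ln 2 + K^2 * ln N + K * ln 2 - K * t^2 / 8)"
  proof -
    have "real (k * k) * ln N \<le> K^2 * ln N"
      using N k by (intro mult_right_mono) (auto simp: power2_eq_square intro: mult_mono)
    moreover have "k * ln 2 \<le> K * ln 2"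
      using k by (intro mult_right_mono) auto
    moreover have "K * t^2 \<le> (2 * k) * t^2"
      using k by (intro mult_right_mono) auto
    ultimately show ?thesis by (simp only: exp_le_cancel_iff)
  qed
  finally show ?thesis .
qed

lemma eventually_union_bound_le_inverse_square:
  fixes \<delta> a :: real
  assumes \<delta>: "0 < \<delta>" "\<delta> < 1/6" and a: "0 < a"
  shows "\<forall>\<^sub>F N in sequentially.
    2 ^ N * real N ^ (nat \<lfloor>real N powr (3*\<delta>)\<rfloor> * nat \<lfloor>real N powr (3*\<delta>)\<rfloor>)
      * (2 * exp (-((a * real N powr (1/2 - \<delta>))^2)/4)) ^ nat \<lfloor>real N powr (3*\<delta>)\<rfloor>
    \<le> inverse (real N ^ 2)"
proof -
  have "\<forall>\<^sub>F N in sequentially. real N * ln 2 + real N powr (6*\<delta>) * ln N + real N powr (3*\<delta>) * ln 2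
      - (a^2/8) * real N powr (1+\<delta>) \<le> - 2 * ln N"
    using \<delta> a by real_asymp
  with eventually_ge_at_top[of 1] show ?thesis
  proof eventually_elim
    case (elim N)
    define K where "K = real N powr (3*\<delta>)"
    define t where "t = a * real N powr (1/2 - \<delta>)"
    define k where "k = nat \<lfloor>K\<rfloor>"
    have "K \<ge> 1" unfolding K_def using elim \<delta> by (intro ge_one_powr_ge_zero) auto
    then have "real k = \<lfloor>K\<rfloor>" "1 \<le> \<lfloor>K\<rfloor>" unfolding k_def by simp_all
    then have k: "K / 2 \<le> k" "k \<le> K"
      using real_of_int_floor_gt_diff_one[of K] of_int_floor_le[of K] by linarith+
    have "t^2 = a^2 * real N powr (1 - 2*\<delta>)"
      unfolding t_def by (simp add: power_mult_distrib power2_eq_square flip: powr_add)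
    then have "K * t^2 / 8 = (a^2/8) * real N powr (1+\<delta>)"
      unfolding K_def by (simp add: add.commute flip: powr_add)
    have "K^2 = real N powr (6*\<delta>)"
      unfolding K_def by (simp add: power2_eq_square flip: powr_add)
    have "2 ^ N * real N ^ (k * k) * (2 * exp (-(t^2)/4)) ^ k
        \<le> exp (N * ln 2 + K^2 * ln N + K * ln 2 - K * t^2 / 8)"
      by (rule union_bound_le_exp[OF elim(1) k])
    also have "\<dots> \<le> exp (- 2 * ln N)"
      using elim(2) \<open>K^2 = _\<close> \<open>K * t^2 / 8 = _\<close> unfolding K_def by simp
    also have "\<dots> = inverse (real N ^ 2)"
      using elim(1) by (simp add: exp_minus exp_double)
    finally show ?case unfolding k_def K_def t_def .
  qed
qed

locale hcube_gaussian_field = prob_space +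
  fixes E :: "nat \<Rightarrow> int list \<Rightarrow> 'a \<Rightarrow> real"
  assumes indep: "indep_vars (\<lambda>_. borel) (\<lambda>(N, x). E N x) gidx"
    and std_normal: "\<And>N x. (N, x) \<in> gidx \<Longrightarrow> distributed M lborel (E N x) std_normal_density"
begin

definition spheres_exceed_at :: "nat \<Rightarrow> nat \<Rightarrow> real \<Rightarrow> int list \<Rightarrow> 'a set" where
  "spheres_exceed_at N k t x = {\<omega>\<in>space M. \<forall>r\<in>{1..k}. \<exists>y\<in>hsphere N x r. t < E N y \<omega>}"

definition spheres_exceed_somewhere :: "nat \<Rightarrow> nat \<Rightarrow> real \<Rightarrow> 'a set" where
  "spheres_exceed_somewhere N k t = (\<Union>x\<in>hcube N. spheres_exceed_at N k t x)"

lemma sets_spheres_exceed_at: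
  assumes "1 \<le> N"
  shows "spheres_exceed_at N k t x \<in> events"
proof -
  have "{\<omega>\<in>space M. t < E N y \<omega>} \<in> events" if "y \<in> hcube N" for y
  proof -
    have "random_variable borel (E N y)"
      using distributed_measurable[OF std_normal[of N y]] that assms by (simp add: gidx_def)
    then show ?thesis by measurable
  qed
  then show ?thesis
    unfolding spheres_exceed_at_def
    by (intro sets.sets_Collect_finite_All sets.sets_Collect_finite_Ex) (auto simp: hsphere_def)
qed

lemma sets_spheres_exceed_somewhere: "1 \<le> N \<Longrightarrow> spheres_exceed_somewhere N k t \<in> events"
  unfolding spheres_exceed_somewhere_def by (intro sets.finite_UN sets_spheres_exceed_at) auto

lemma prob_spheres_exceed_at_le:
  assumes N: "1 \<le> N" and x: "x \<in> hcube N" and t: "0 \<le> t"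
  shows "prob (spheres_exceed_at N k t x) \<le> real N ^ (k * k) * (2 * exp (-(t^2)/4)) ^ k"
proof -
  define S where "S r = Pair N ` hsphere N x r" for r
  have "spheres_exceed_at N k t x
      = {\<omega>\<in>space M. \<forall>r\<in>{1..k}. \<exists>i\<in>S r. t < (\<lambda>(N, x). E N x) i \<omega>}"
    by (simp add: spheres_exceed_at_def S_def)
  also have "prob \<dots> \<le> (\<Prod>r\<in>{1..k}. real (card (S r))) * (2 * exp (-(t^2)/4)) ^ card {1..k}"
  proof (rule prob_every_block_exceeds_le[OF indep])
    show "finite (S r) \<and> S r \<subseteq> gidx" for r
      using N by (auto simp: S_def gidx_def hsphere_def)
    show "disjoint_family_on S {1..k}"
      by (auto simp: disjoint_family_on_def S_def hsphere_def)
    show "prob {\<omega>\<in>space M. t < (\<lambda>(N, x). E N x) i \<omega>} \<le> 2 * exp (-(t^2)/4)" if "i \<in> gidx" for i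
      using prob_std_normal_greater_le[OF std_normal t] that by (cases i) auto
  qed simp
  also have "(\<Prod>r\<in>{1..k}. real (card (S r))) \<le> (\<Prod>r\<in>{1..k}. real N ^ k)"
  proof (intro prod_mono conjI)
    fix r assume r: "r \<in> {1..k}"
    have "card (S r) \<le> N ^ r"
      unfolding S_def using card_hsphere_le[OF x] by (simp add: card_image inj_on_def)
    also have "\<dots> \<le> N ^ k" using r N by (intro power_increasing) auto
    finally show "real (card (S r)) \<le> real N ^ k" by (simp flip: of_nat_power)
  qed simp
  finally show ?thesis by (simp add: power_mult)
qed

lemma prob_spheres_exceed_somewhere_le:
  assumes N: "1 \<le> N" and t: "0 \<le> t"
  shows "prob (spheres_exceed_somewhere N k t) \<le> 2 ^ N * real N ^ (k * k) * (2 * exp (-(t^2)/4)) ^ k"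
proof -
  have "prob (spheres_exceed_somewhere N k t) \<le> (\<Sum>x\<in>hcube N. prob (spheres_exceed_at N k t x))"
    unfolding spheres_exceed_somewhere_def using N by (intro measure_UNION_le sets_spheres_exceed_at) auto
  also have "\<dots> \<le> (\<Sum>x\<in>hcube N. real N ^ (k * k) * (2 * exp (-(t^2)/4)) ^ k)"
    using N t by (intro sum_mono prob_spheres_exceed_at_le)
  finally show ?thesis by (simp add: card_hcube)
qed

lemma summable_prob_spheres_exceed_somewhere:
  assumes \<delta>: "0 < \<delta>" "\<delta> < 1/6" and a: "0 < a"
  shows "summable (\<lambda>N. prob (spheres_exceed_somewhere N
    (nat \<lfloor>real N powr (3*\<delta>)\<rfloor>) (a * real N powr (1/2 - \<delta>))))"
proof (rule summable_comparison_test_ev)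
  show "summable (\<lambda>N. inverse (real N ^ 2))" by (simp add: inverse_power_summable)
  from eventually_ge_at_top[of 1] eventually_union_bound_le_inverse_square[OF \<delta> a]
  show "\<forall>\<^sub>F N in sequentially. norm (prob (spheres_exceed_somewhere N
    (nat \<lfloor>real N powr (3*\<delta>)\<rfloor>) (a * real N powr (1/2 - \<delta>)))) \<le> inverse (real N ^ 2)"
    by eventually_elim (use a in \<open>auto intro: order_trans[OF prob_spheres_exceed_somewhere_le]\<close>)
qed

lemma AE_eventually_radii_below:
  assumes \<delta>: "0 < \<delta>" "\<delta> < 1/6" and a: "0 < a"
  shows "AE \<omega> in M. \<forall>\<^sub>F N in sequentially. \<exists>\<rho> :: int list \<Rightarrow> nat. \<forall>x\<in>hcube N.
    1 \<le> \<rho> x \<and> real (\<rho> x) \<le> real N powr (3*\<delta>) \<and>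
    (\<forall>y\<in>hsphere N x (\<rho> x). E N y \<omega> \<le> a * real N powr (1/2 - \<delta>))"
proof -
  define k where "k N = nat \<lfloor>real N powr (3*\<delta>)\<rfloor>" for N :: nat
  define t where "t N = a * real N powr (1/2 - \<delta>)" for N :: nat
  have k_le: "real r \<le> real N powr (3*\<delta>)" if "r \<le> k N" for r N
    using that of_nat_floor[of "real N powr (3*\<delta>)"] unfolding k_def
    by (meson of_nat_mono order_trans powr_ge_zero)
  \<comment> \<open>Borel-Cantelli is applied to the shifted sequence, since E 0 is unconstrained.\<close>
  have "summable (\<lambda>N. prob (spheres_exceed_somewhere N (k N) (t N)))"
    using summable_prob_spheres_exceed_somewhere[OF \<delta> a] unfolding k_def t_def .
  then have "summable (\<lambda>n. prob (spheres_exceed_somewhere (Suc n) (k (Suc n)) (t (Suc n))))"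
    by (subst summable_Suc_iff)
  then have "AE \<omega> in M. \<forall>\<^sub>F n in sequentially.
      \<omega> \<in> space M - spheres_exceed_somewhere (Suc n) (k (Suc n)) (t (Suc n))"
    by (intro borel_cantelli_AE1 sets_spheres_exceed_somewhere) (simp_all add: emeasure_eq_measure)
  then show ?thesis
  proof (rule eventually_mono)
    fix \<omega> assume "\<forall>\<^sub>F n in sequentially.
      \<omega> \<in> space M - spheres_exceed_somewhere (Suc n) (k (Suc n)) (t (Suc n))"
    then have "\<forall>\<^sub>F N in sequentially. \<omega> \<in> space M - spheres_exceed_somewhere N (k N) (t N)"
      by (rule eventually_sequentially_Suc [THEN iffD1])
    then show "\<forall>\<^sub>F N in sequentially. \<exists>\<rho> :: int list \<Rightarrow> nat. \<forall>x\<in>hcube N.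
      1 \<le> \<rho> x \<and> real (\<rho> x) \<le> real N powr (3*\<delta>) \<and>
      (\<forall>y\<in>hsphere N x (\<rho> x). E N y \<omega> \<le> a * real N powr (1/2 - \<delta>))"
    proof (rule eventually_mono)
      fix N assume "\<omega> \<in> space M - spheres_exceed_somewhere N (k N) (t N)"
      then have "\<forall>x\<in>hcube N. \<exists>r. r \<in> {1..k N} \<and> (\<forall>y\<in>hsphere N x r. E N y \<omega> \<le> t N)"
        by (fastforce simp: spheres_exceed_somewhere_def spheres_exceed_at_def not_less)
      then show "\<exists>\<rho> :: int list \<Rightarrow> nat. \<forall>x\<in>hcube N.
        1 \<le> \<rho> x \<and> real (\<rho> x) \<le> real N powr (3*\<delta>) \<and>
        (\<forall>y\<in>hsphere N x (\<rho> x). E N y \<omega> \<le> a * real N powr (1/2 - \<delta>))"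
        unfolding t_def by (intro bchoice) (meson atLeastAtMost_iff k_le)
    qed
  qed
qed
end

lemma exp_le_two_powr:
  fixes \<beta> \<delta> e :: real and N :: nat
  assumes \<beta>: "0 < \<beta>" and e: "e \<le> ln 2 / (2 * \<beta>) * real N powr (1/2 - \<delta>)"
  shows "exp (\<beta> * sqrt N * e) \<le> 2 powr ((1/2) * real N powr (1 - \<delta>))"
proof (cases "N = 0")
  case False
  then have "sqrt N * real N powr (1/2 - \<delta>) = real N powr (1 - \<delta>)"
    by (simp add: powr_half_sqrt [symmetric] flip: powr_add)
  moreover have "\<beta> * sqrt N * e \<le> \<beta> * sqrt N * (ln 2 / (2 * \<beta>) * real N powr (1/2 - \<delta>))"
    using \<beta> e by (intro mult_left_mono) auto
  ultimately have "\<beta> * sqrt N * e \<le> (1/2) * real N powr (1 - \<delta>) * ln 2"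
    using \<beta> by (simp add: field_simps)
  then show ?thesis by (simp add: powr_def)
qed (use e in simp)

theorem lemma4p2:
  fixes M :: "'a measure" and E :: "nat \<Rightarrow> int list \<Rightarrow> 'a \<Rightarrow> real" and \<beta> :: real
  assumes "prob_space M"
    and "prob_space.indep_vars M (\<lambda>_. borel) (\<lambda>(N, x). E N x) gidx"
    and "\<And>N x. (N, x) \<in> gidx \<Longrightarrow> distributed M lborel (E N x) std_normal_density"
    and "\<beta> > 0"
  shows "\<forall>\<delta>::real. 0 < \<delta> \<and> \<delta> < 1/6 \<longrightarrow>
    (AE \<omega> in M. \<exists>N0. \<forall>N\<ge>N0. \<exists>\<rho> :: int list \<Rightarrow> nat.
       \<forall>x \<in> hcube N. 1 \<le> \<rho> x \<and> real (\<rho> x) \<le> real N powr (3 * \<delta>) \<and>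
         (\<forall>y \<in> hsphere N x (\<rho> x).
            exp (\<beta> * sqrt (real N) * E N y \<omega>) \<le> 2 powr ((1/2) * real N powr (1 - \<delta>))))"
proof (intro allI impI)
  fix \<delta> :: real assume \<delta>: "0 < \<delta> \<and> \<delta> < 1/6"
  interpret hcube_gaussian_field M E
    using assms(1-3) by (intro hcube_gaussian_field.intro hcube_gaussian_field_axioms.intro)
  have "AE \<omega> in M. \<forall>\<^sub>F N in sequentially. \<exists>\<rho> :: int list \<Rightarrow> nat. \<forall>x\<in>hcube N.
      1 \<le> \<rho> x \<and> real (\<rho> x) \<le> real N powr (3*\<delta>) \<and>
      (\<forall>y\<in>hsphere N x (\<rho> x). E N y \<omega> \<le> ln 2 / (2 * \<beta>) * real N powr (1/2 - \<delta>))"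
    using \<delta> assms(4) by (intro AE_eventually_radii_below) auto
  then show "AE \<omega> in M. \<exists>N0. \<forall>N\<ge>N0. \<exists>\<rho> :: int list \<Rightarrow> nat.
       \<forall>x \<in> hcube N. 1 \<le> \<rho> x \<and> real (\<rho> x) \<le> real N powr (3 * \<delta>) \<and>
         (\<forall>y \<in> hsphere N x (\<rho> x).
            exp (\<beta> * sqrt (real N) * E N y \<omega>) \<le> 2 powr ((1/2) * real N powr (1 - \<delta>)))"
    by (rule eventually_mono) (unfold eventually_sequentially, meson exp_le_two_powr[OF assms(4)])
qed

end
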